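(* Let $\mathbb{F}$ be a non-Archimedean field and let $1\le s\le n$ be an integer. Then for every non-singular $n\times n$ matrix $T$ over $\mathbb{F}$, $\phi^s(T)=\max_{T_s}\|\det T_s\|$, the maximum taken over all $s\times s$ submatrices $T_s$ of $T$.
   Context: $\mathbb{F}$ carries a non-Archimedean absolute value $\|\cdot\|$. On $\mathbb{F}^n$, $\|x\|=\max_i\|x_i\|$; $\|T\|=\sup_{x\ne0}\|Tx\|/\|x\|$; $I_n=\{T:\|T\|=1=\|\det T\|\}$. Every non-singular $T$ factors as $T=PDQ$ with $P,Q\in I_n$, $D=\mathrm{diag}(\sigma_1,\dots,\sigma_n)$, $\|\sigma_1\|\ge\dots\ge\|\sigma_n\|>0$, and $\alpha_i=\|\sigma_i\|$ (the singular values of $T$) are uniquely determined by $T$. For integer $1\le s\le n$ the singular value function is $\phi^s(T)=\alpha_1\alpha_2\cdots\alpha_s$. *)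

theory Defs
  imports "Jordan_Normal_Form.Determinant" "Jordan_Normal_Form.DL_Submatrix"
begin

definition nonarch_abs :: "('a::field \<Rightarrow> real) \<Rightarrow> bool" where
  "nonarch_abs av \<longleftrightarrow>
     (\<forall>x. av x \<ge> 0) \<and> (\<forall>x. av x = 0 \<longleftrightarrow> x = 0) \<and>
     (\<forall>x y. av (x * y) = av x * av y) \<and>
     (\<forall>x y. av (x + y) \<le> max (av x) (av y))"

definition vnorm :: "('a::field \<Rightarrow> real) \<Rightarrow> 'a vec \<Rightarrow> real" where
  "vnorm av x = Max ((\<lambda>i. av (x $ i)) ` {..<dim_vec x})"

definition opnorm :: "('a::field \<Rightarrow> real) \<Rightarrow> 'a mat \<Rightarrow> real" where
  "opnorm av T = Sup {vnorm av (T *\<^sub>v x) / vnorm av x | x.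
       x \<in> carrier_vec (dim_col T) \<and> x \<noteq> 0\<^sub>v (dim_col T)}"

definition isom_group :: "('a::field \<Rightarrow> real) \<Rightarrow> nat \<Rightarrow> 'a mat set" where
  "isom_group av n = {T \<in> carrier_mat n n. opnorm av T = 1 \<and> av (det T) = 1}"

definition diag_of :: "nat \<Rightarrow> (nat \<Rightarrow> 'a::field) \<Rightarrow> 'a mat" where
  "diag_of n \<sigma> = mat n n (\<lambda>(i,j). if i = j then \<sigma> i else 0)"

definition is_svd_values :: "('a::field \<Rightarrow> real) \<Rightarrow> 'a mat \<Rightarrow> real list \<Rightarrow> bool" where
  "is_svd_values av T \<alpha> \<longleftrightarrow> (let n = dim_row T in
     length \<alpha> = n \<and>
     (\<exists>P Q \<sigma>. P \<in> isom_group av n \<and> Q \<in> isom_group av n \<and>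
        T = P * diag_of n \<sigma> * Q \<and>
        (\<forall>i<n. av (\<sigma> i) = \<alpha> ! i) \<and>
        (\<forall>i j. i \<le> j \<longrightarrow> j < n \<longrightarrow> \<alpha> ! j \<le> \<alpha> ! i) \<and>
        (\<forall>i<n. \<alpha> ! i > 0)))"

definition singular_values :: "('a::field \<Rightarrow> real) \<Rightarrow> 'a mat \<Rightarrow> real list" where
  "singular_values av T = (THE \<alpha>. is_svd_values av T \<alpha>)"

definition sv_fun :: "('a::field \<Rightarrow> real) \<Rightarrow> nat \<Rightarrow> 'a mat \<Rightarrow> real" where
  "sv_fun av s T = (\<Prod>i<s. singular_values av T ! i)"

end

theory Submission
  imports Defs
begin

text \<open>Multiplying by a matrix with integral entries cannot increase the largest \<open>s \<times> s\<close> minor: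
  expanding a minor of \<open>X * A\<close> multilinearly in its rows gives integral multiples of minors of
  \<open>A\<close>, and by the ultrametric inequality the sum is bounded by its largest term. Isometries
  \<open>P, Q \<in> I_n\<close> are exactly the integral matrices with integral inverse, so the largest minor of
  \<open>P D Q\<close> equals that of \<open>D\<close>, which for a diagonal \<open>D\<close> with decreasing moduli is
  \<open>\<alpha>_1 \<cdots> \<alpha>_s\<close>. Existence of the decomposition is Gaussian elimination with full pivoting:
  choosing an entry of maximal modulus as pivot keeps every multiplier integral. Uniqueness of
  the \<open>\<alpha>_i\<close> follows since their partial products are determined by \<open>T\<close>.\<close>

lemma card_Collect_less_in:
  assumes "I \<subseteq> {..<n}"
  shows "card {i. i < n \<and> i \<in> I} = card I"
proof -
  have "{i. i < n \<and> i \<in> I} = I" using assms by auto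
  then show ?thesis by simp
qed

lemma pick_less: "I \<subseteq> {..<n} \<Longrightarrow> a < card I \<Longrightarrow> pick I a < n"
  using pick_le[of a n I] card_Collect_less_in[of I n] by simp

lemma pick_ge: assumes "a < card I" shows "a \<le> pick I a"
proof -
  have "card {x\<in>I. x < pick I a} = a" by (rule card_pick_le[OF assms])
  moreover have "card {x\<in>I. x < pick I a} \<le> card {..<pick I a}" by (rule card_mono) auto
  ultimately show ?thesis by simp
qed

lemma pick_lessThan: assumes "a < s" shows "pick {..<s} a = a"
proof -
  have "{x\<in>{..<s}. x < a} = {..<a}" using assms by auto
  then show ?thesis using pick_card_in_set[of a "{..<s}"] assms by simp
qed

lemma submatrix_carrier:
  assumes "A \<in> carrier_mat n m" "I \<subseteq> {..<n}" "J \<subseteq> {..<m}"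
  shows "submatrix A I J \<in> carrier_mat (card I) (card J)"
proof -
  have "dim_row A = n" "dim_col A = m" using assms(1) by auto
  then show ?thesis
    using card_Collect_less_in[OF assms(2)] card_Collect_less_in[OF assms(3)]
    by (intro carrier_matI) (simp_all add: dim_submatrix)
qed

lemma submatrix_mult:
  assumes A: "A \<in> carrier_mat n m" and B: "B \<in> carrier_mat m p"
  shows "submatrix (A * B) I J = submatrix A I UNIV * submatrix B UNIV J"
proof (rule eq_matI)
  fix i j assume "i < dim_row (submatrix A I UNIV * submatrix B UNIV J)"
    "j < dim_col (submatrix A I UNIV * submatrix B UNIV J)"
  then have i: "i < card {i. i < n \<and> i \<in> I}" and j: "j < card {j. j < p \<and> j \<in> J}"
    using A B by (auto simp: dim_submatrix)
  have "submatrix (A * B) I J $$ (i, j) = (\<Sum>k<m. A $$ (pick I i, k) * B $$ (k, pick J j))"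
    using A B i j pick_le[OF i] pick_le[OF j]
    by (simp add: submatrix_index scalar_prod_def atLeast0LessThan)
  also have "\<dots> = (submatrix A I UNIV * submatrix B UNIV J) $$ (i, j)"
    using A B i j by (simp add: dim_submatrix submatrix_index pick_UNIV scalar_prod_def atLeast0LessThan)
  finally show "submatrix (A * B) I J $$ (i, j) = (submatrix A I UNIV * submatrix B UNIV J) $$ (i, j)" .
qed (use A B in \<open>simp_all add: dim_submatrix\<close>)

lemma submatrix_transpose:
  "submatrix (transpose_mat A) I J = transpose_mat (submatrix A J I)"
proof (rule eq_matI)
  fix i j assume "i < dim_row (transpose_mat (submatrix A J I))"
    "j < dim_col (transpose_mat (submatrix A J I))"
  then have i: "i < card {j. j < dim_col A \<and> j \<in> I}" and j: "j < card {i. i < dim_row A \<and> i \<in> J}"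
    by (simp_all add: dim_submatrix)
  show "submatrix (transpose_mat A) I J $$ (i, j) = transpose_mat (submatrix A J I) $$ (i, j)"
    using i j pick_le[OF i] pick_le[OF j] by (simp add: dim_submatrix submatrix_index)
qed (simp_all add: dim_submatrix)

lemma det_zero_rowI:
  assumes A: "A \<in> carrier_mat n n" and c: "c < n" and zero: "\<And>j. j < n \<Longrightarrow> A $$ (c,j) = 0"
  shows "det A = 0"
  unfolding det_def'[OF A]
proof (rule sum.neutral, rule ballI)
  fix p assume "p \<in> {p. p permutes {0..<n}}"
  then have "p c < n" using permutes_in_image c by fastforce
  then have "(\<Prod>i = 0..<n. A $$ (i, p i)) = 0"
    using c zero by (intro prod_zero bexI[of _ c]) auto
  then show "signof p * (\<Prod>i = 0..<n. A $$ (i, p i)) = 0" by simp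
qed

lemma det_diagonal:
  assumes A: "A \<in> carrier_mat n n"
    and off_diag: "\<And>i j. i < n \<Longrightarrow> j < n \<Longrightarrow> i \<noteq> j \<Longrightarrow> A $$ (i,j) = 0"
  shows "det A = (\<Prod>i<n. A $$ (i,i))"
proof -
  have "upper_triangular A" unfolding upper_triangular_def using A off_diag by auto
  then have "det A = prod_list (diag_mat A)" by (rule det_upper_triangular[OF _ A])
  also have "\<dots> = (\<Prod>i<n. A $$ (i,i))"
    using A by (simp add: diag_mat_def prod.distinct_set_conv_list[symmetric] atLeast0LessThan)
  finally show ?thesis .
qed

lemma rank_permutes:
  assumes inj: "inj_on f {0..<s}"
  defines "g \<equiv> \<lambda>a. if a < s then card {k \<in> f ` {0..<s}. k < f a} else a"
  shows "g permutes {0..<s}" and "\<And>a. a < s \<Longrightarrow> pick (f ` {0..<s}) (g a) = f a"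
proof -
  let ?K = "f ` {0..<s}"
  have card_K: "card ?K = s" using card_image[OF inj] by simp
  show pick_g: "pick ?K (g a) = f a" if "a < s" for a
    unfolding g_def using that pick_card_in_set[of "f a" ?K] by simp
  have g_less: "g a < s" if "a < s" for a
  proof -
    have "{k \<in> ?K. k < f a} \<subset> ?K" using that by auto
    then have "card {k \<in> ?K. k < f a} < card ?K" by (intro psubset_card_mono) auto
    then show ?thesis unfolding g_def using that card_K by simp
  qed
  have "g \<in> {0..<s} \<rightarrow> {0..<s}" using g_less by auto
  moreover have "g a = a" if "a \<notin> {0..<s}" for a using that by (simp add: g_def)
  moreover have "inj_on g {0..<s}"
  proof (rule inj_onI)
    fix a b assume "a \<in> {0..<s}" "b \<in> {0..<s}" "g a = g b"
    then show "a = b" using pick_g[of a] pick_g[of b] inj_onD[OF inj] by force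
  qed
  ultimately show "g permutes {0..<s}" by (intro inj_on_nat_permutes) auto
qed

lemma det_rows_of_submatrix:
  assumes A: "A \<in> carrier_mat n m" and J: "J \<subseteq> {..<m}" "card J = s"
    and inj: "inj_on f {0..<s}" and f: "\<And>a. a < s \<Longrightarrow> f a < n"
  shows "\<exists>g. g permutes {0..<s} \<and>
    det (mat\<^sub>r s s (\<lambda>a. row (submatrix A UNIV J) (f a))) = signof g * det (submatrix A (f ` {0..<s}) J)"
proof -
  let ?K = "f ` {0..<s}"
  obtain g where g: "g permutes {0..<s}" and pick_g: "\<And>a. a < s \<Longrightarrow> pick ?K (g a) = f a"
    using rank_permutes[OF inj] by blast
  have K: "?K \<subseteq> {..<n}" "card ?K = s" using f card_image[OF inj] by auto
  have sub: "submatrix A ?K J \<in> carrier_mat s s" using submatrix_carrier[OF A K(1) J(1)] K J by simp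
  have "mat\<^sub>r s s (\<lambda>a. row (submatrix A UNIV J) (f a)) = mat s s (\<lambda>(a,b). submatrix A ?K J $$ (g a, b))"
  proof (rule eq_matI)
    fix a b assume "a < dim_row (mat s s (\<lambda>(a,b). submatrix A ?K J $$ (g a, b)))"
      "b < dim_col (mat s s (\<lambda>(a,b). submatrix A ?K J $$ (g a, b)))"
    then have a: "a < s" and b: "b < s" by auto
    have "g a < s" using permutes_in_image[OF g] a by simp
    then show "mat\<^sub>r s s (\<lambda>a. row (submatrix A UNIV J) (f a)) $$ (a, b)
        = mat s s (\<lambda>(a,b). submatrix A ?K J $$ (g a, b)) $$ (a, b)"
      using a b A f[OF a] pick_g[OF a] card_Collect_less_in[OF J(1)] card_Collect_less_in[OF K(1)] J K
      by (simp add: dim_submatrix submatrix_index pick_UNIV)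
  qed auto
  then show ?thesis using det_permute_rows[OF sub g] g by auto
qed

lemma det_submatrix_mult_expansion:
  fixes X :: "'b::comm_ring_1 mat"
  assumes X: "X \<in> carrier_mat n m" and A: "A \<in> carrier_mat m p"
    and I: "I \<subseteq> {..<n}" "card I = s" and J: "J \<subseteq> {..<p}" "card J = s"
  shows "det (submatrix (X * A) I J) =
    (\<Sum>f | (\<forall>i\<in>{0..<s}. f i \<in> {0..<m}) \<and> (\<forall>i. i \<notin> {0..<s} \<longrightarrow> f i = i).
      (\<Prod>i\<in>{0..<s}. X $$ (pick I i, f i)) * det (mat\<^sub>r s s (\<lambda>i. row (submatrix A UNIV J) (f i))))"
proof -
  let ?Y = "submatrix X I UNIV" and ?B = "submatrix A UNIV J"
  have Y: "?Y \<in> carrier_mat s m"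
    using X card_Collect_less_in[OF I(1)] I(2) by (intro carrier_matI) (auto simp: dim_submatrix)
  have B: "?B \<in> carrier_mat m s"
    using A card_Collect_less_in[OF J(1)] J(2) by (intro carrier_matI) (auto simp: dim_submatrix)
  have Y_index: "?Y $$ (i,k) = X $$ (pick I i, k)" if "i < s" "k < m" for i k
    using that X card_Collect_less_in[OF I(1)] I(2) by (subst submatrix_index) (auto simp: pick_UNIV)
  have "submatrix (X * A) I J = mat\<^sub>r s s (\<lambda>i. finsum_vec TYPE('b) s (\<lambda>k. ?Y $$ (i,k) \<cdot>\<^sub>v row ?B k) {0..<m})"
    unfolding submatrix_mult[OF X A] by (rule mat_mul_finsum_alt[OF Y B])
  then have "det (submatrix (X * A) I J) =
      (\<Sum>f | (\<forall>i\<in>{0..<s}. f i \<in> {0..<m}) \<and> (\<forall>i. i \<notin> {0..<s} \<longrightarrow> f i = i).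
        det (mat\<^sub>r s s (\<lambda>i. ?Y $$ (i, f i) \<cdot>\<^sub>v row ?B (f i))))"
    using det_linear_rows_sum[of "{0..<m}" "\<lambda>i k. ?Y $$ (i,k) \<cdot>\<^sub>v row ?B k" s] B by auto
  also have "\<dots> = (\<Sum>f | (\<forall>i\<in>{0..<s}. f i \<in> {0..<m}) \<and> (\<forall>i. i \<notin> {0..<s} \<longrightarrow> f i = i).
      (\<Prod>i\<in>{0..<s}. ?Y $$ (i, f i)) * det (mat\<^sub>r s s (\<lambda>i. row ?B (f i))))"
    using B by (intro sum.cong refl det_rows_mul) auto
  also have "\<dots> = (\<Sum>f | (\<forall>i\<in>{0..<s}. f i \<in> {0..<m}) \<and> (\<forall>i. i \<notin> {0..<s} \<longrightarrow> f i = i).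
      (\<Prod>i\<in>{0..<s}. X $$ (pick I i, f i)) * det (mat\<^sub>r s s (\<lambda>i. row ?B (f i))))"
    using Y_index by (intro sum.cong refl arg_cong2[where f = "(*)"] prod.cong) auto
  finally show ?thesis .
qed

lemma submatrix_diag_of_index:
  assumes "I \<subseteq> {..<n}" "J \<subseteq> {..<n}" "a < card I" "b < card J"
  shows "submatrix (diag_of n \<sigma>) I J $$ (a,b) = (if pick I a = pick J b then \<sigma> (pick I a) else 0)"
  using assms pick_less[OF assms(1,3)] pick_less[OF assms(2,4)]
  by (simp add: submatrix_index card_Collect_less_in diag_of_def)

lemma det_submatrix_diag_of:
  assumes I: "I \<subseteq> {..<n}"
  shows "det (submatrix (diag_of n \<sigma>) I I) = (\<Prod>a<card I. \<sigma> (pick I a))"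
proof -
  have "submatrix (diag_of n \<sigma>) I I \<in> carrier_mat (card I) (card I)"
    using submatrix_carrier[of "diag_of n \<sigma>" n n I I] I by (simp add: diag_of_def)
  moreover have "pick I a \<noteq> pick I b" if "a < card I" "b < card I" "a \<noteq> b" for a b
    using that pick_mono_le[of a I b] pick_mono_le[of b I a] by (cases "a < b") auto
  ultimately show ?thesis
    using I by (subst det_diagonal) (auto simp: submatrix_diag_of_index)
qed

lemma det_submatrix_diag_of_eq_0:
  assumes I: "I \<subseteq> {..<n}" and J: "J \<subseteq> {..<n}" and card: "card I = card J" and "I \<noteq> J"
  shows "det (submatrix (diag_of n \<sigma>) I J) = 0"
proof -
  have "finite J" using J finite_subset by blast
  then have "\<not> I \<subseteq> J" using card_subset_eq card \<open>I \<noteq> J\<close> by metis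
  then obtain i where "i \<in> I" "i \<notin> J" by blast
  define c where "c = card {x\<in>I. x < i}"
  have "{x\<in>I. x < i} \<subset> I" using \<open>i \<in> I\<close> by auto
  then have c: "c < card I" unfolding c_def using I finite_subset by (intro psubset_card_mono) auto
  have "pick I c = i" unfolding c_def by (rule pick_card_in_set[OF \<open>i \<in> I\<close>])
  moreover have "pick J b \<in> J" if "b < card J" for b using pick_in_set_le[OF that] .
  moreover have "diag_of n \<sigma> \<in> carrier_mat n n" by (simp add: diag_of_def)
  ultimately show ?thesis
    using submatrix_carrier[of "diag_of n \<sigma>" n n I J] I J card c \<open>i \<notin> J\<close>
    by (intro det_zero_rowI[of _ "card I" c]) (auto simp: submatrix_diag_of_index)
qed

lemma swaprows_swapcols_index:
  assumes A: "A \<in> carrier_mat n n" and "k < n" "i0 < n" "j0 < n" "i < n" "j < n"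
  shows "(swaprows_mat n k i0 * A * swaprows_mat n k j0) $$ (i,j)
    = A $$ (Transposition.transpose k i0 i, Transposition.transpose k j0 j)"
proof -
  have "swaprows_mat n k i0 * A * swaprows_mat n k j0 = swapcols k j0 (swaprows k i0 A)"
    unfolding swaprows_mat[OF A \<open>k < n\<close> \<open>i0 < n\<close>, symmetric]
    using swapcols_mat[of "swaprows k i0 A" n n k j0] A assms by simp
  then show ?thesis using A assms by (auto simp: transpose_def)
qed

definition elim_below :: "nat \<Rightarrow> nat \<Rightarrow> (nat \<Rightarrow> 'a::{zero,one}) \<Rightarrow> 'a mat" where
  "elim_below n k c = mat n n (\<lambda>(i,j). if i = j then 1 else if j = k \<and> k < i then c i else 0)"

lemma elim_below_carrier [simp]: "elim_below n k c \<in> carrier_mat n n"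
  unfolding elim_below_def by simp

lemma elim_below_mult_index:
  fixes A :: "'a::semiring_1 mat"
  assumes A: "A \<in> carrier_mat n m" and "k < n" "i < n" "j < m"
  shows "(elim_below n k c * A) $$ (i,j) = A $$ (i,j) + (if k < i then c i * A $$ (k,j) else 0)"
proof -
  have "(elim_below n k c * A) $$ (i,j)
      = (\<Sum>l\<in>{0..<n}. (if l = i then A $$ (l,j) else 0) + (if l = k \<and> k < i then c i * A $$ (k,j) else 0))"
    using assms by (auto simp: scalar_prod_def elim_below_def intro: sum.cong)
  also have "\<dots> = A $$ (i,j) + (if k < i then c i * A $$ (k,j) else 0)"
    using assms by (simp add: sum.distrib)
  finally show ?thesis .
qed

lemma mult_transpose_elim_below_index:
  fixes A :: "'a::comm_semiring_1 mat"
  assumes A: "A \<in> carrier_mat m n" and "k < n" "i < m" "j < n"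
  shows "(A * transpose_mat (elim_below n k c)) $$ (i,j) = A $$ (i,j) + (if k < j then c j * A $$ (i,k) else 0)"
proof -
  have "(A * transpose_mat (elim_below n k c)) $$ (i,j)
      = (\<Sum>l\<in>{0..<n}. (if l = j then A $$ (i,l) else 0) + (if l = k \<and> k < j then c j * A $$ (i,k) else 0))"
    using assms by (auto simp: scalar_prod_def elim_below_def mult.commute intro: sum.cong)
  also have "\<dots> = A $$ (i,j) + (if k < j then c j * A $$ (i,k) else 0)"
    using assms by (simp add: sum.distrib)
  finally show ?thesis .
qed

definition eliminate :: "nat \<Rightarrow> nat \<Rightarrow> 'a::field mat \<Rightarrow> 'a mat" where
  "eliminate n k B = elim_below n k (\<lambda>i. - (B $$ (i,k) / B $$ (k,k))) * B
     * transpose_mat (elim_below n k (\<lambda>j. - (B $$ (k,j) / B $$ (k,k))))"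

lemma eliminate_index:
  fixes B :: "'a::field mat"
  assumes B: "B \<in> carrier_mat n n" and "k < n" "i < n" "j < n" and "B $$ (k,k) \<noteq> 0"
  shows "eliminate n k B $$ (i,j) =
    (if k < i \<or> k < j then B $$ (i,j) - B $$ (i,k) * B $$ (k,j) / B $$ (k,k) else B $$ (i,j))"
proof -
  let ?C = "elim_below n k (\<lambda>i. - (B $$ (i,k) / B $$ (k,k))) * B"
  have C: "?C \<in> carrier_mat n n" by (rule mult_carrier_mat[OF elim_below_carrier B])
  have C_index: "?C $$ (i',j') = B $$ (i',j') - (if k < i' then B $$ (i',k) * B $$ (k,j') / B $$ (k,k) else 0)"
    if "i' < n" "j' < n" for i' j'
    using elim_below_mult_index[OF B \<open>k < n\<close> that] by simp
  show ?thesis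
    unfolding eliminate_def mult_transpose_elim_below_index[OF C assms(2-4)]
    using \<open>B $$ (k,k) \<noteq> 0\<close> assms(2-4) by (simp add: C_index field_simps)
qed

locale nonarch_field =
  fixes av :: "'a::field \<Rightarrow> real"
  assumes nonarch: "nonarch_abs av"
begin

lemma av_nonneg [simp]: "0 \<le> av x"
  using nonarch unfolding nonarch_abs_def by blast

lemma av_eq_0_iff [simp]: "av x = 0 \<longleftrightarrow> x = 0"
  using nonarch unfolding nonarch_abs_def by blast

lemma av_mult [simp]: "av (x * y) = av x * av y"
  using nonarch unfolding nonarch_abs_def by blast

lemma av_0 [simp]: "av 0 = 0"
  by simp

lemma av_add_le_max: "av (x + y) \<le> max (av x) (av y)"
  using nonarch unfolding nonarch_abs_def by blast

lemma av_pos: "x \<noteq> 0 \<Longrightarrow> 0 < av x"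
  using av_nonneg[of x] av_eq_0_iff[of x] by linarith

lemma av_1 [simp]: "av 1 = 1"
  using av_mult[of 1 1] by (metis av_eq_0_iff mult_cancel_left2 one_neq_zero)

lemma av_minus_1 [simp]: "av (-1) = 1"
proof -
  have "av (-1) * av (-1) = 1" using av_mult[of "-1" "-1"] by simp
  then show ?thesis using av_nonneg[of "-1"] by (metis abs_of_nonneg power2_eq_square real_sqrt_abs real_sqrt_one)
qed

lemma av_uminus [simp]: "av (- x) = av x"
  using av_mult[of "-1" x] by simp

lemma av_diff_le_max: "av (x - y) \<le> max (av x) (av y)"
  using av_add_le_max[of x "- y"] by simp

lemma av_inverse [simp]: "av (inverse x) = inverse (av x)"
proof (cases "x = 0")
  case False
  then have "av x * av (inverse x) = 1" using av_mult[of x "inverse x"] by simp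
  then show ?thesis by (rule inverse_unique[symmetric])
qed simp

lemma av_divide [simp]: "av (x / y) = av x / av y"
  by (simp add: divide_inverse)

lemma av_power [simp]: "av (x ^ k) = av x ^ k"
  by (induct k) auto

lemma av_signof [simp]: "av (signof p) = 1"
  by (simp add: sign_def)

lemma av_prod: "av (prod f S) = (\<Prod>x\<in>S. av (f x))"
  by (induct S rule: infinite_finite_induct) auto

lemma av_sum_le:
  assumes "\<And>x. x \<in> S \<Longrightarrow> av (f x) \<le> c" and "0 \<le> c"
  shows "av (sum f S) \<le> c"
  using assms
proof (induct S rule: infinite_finite_induct)
  case (insert x F)
  then have "av (f x) \<le> c" "av (sum f F) \<le> c" by auto
  then show ?case using av_add_le_max[of "f x" "sum f F"] insert(1,2) by simp
qed auto

lemma av_prod_le_1: "(\<And>x. x \<in> S \<Longrightarrow> av (f x) \<le> 1) \<Longrightarrow> av (prod f S) \<le> 1"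
  unfolding av_prod by (intro prod_le_1) auto

definition integral_mat :: "nat \<Rightarrow> 'a mat \<Rightarrow> bool" where
  "integral_mat n P \<longleftrightarrow> P \<in> carrier_mat n n \<and> (\<forall>i<n. \<forall>j<n. av (P $$ (i,j)) \<le> 1)"

definition integral_unit :: "nat \<Rightarrow> 'a mat \<Rightarrow> bool" where
  "integral_unit n P \<longleftrightarrow> integral_mat n P \<and> (\<exists>P'. integral_mat n P' \<and> P' * P = 1\<^sub>m n)"

lemma integral_mat_one: "integral_mat n (1\<^sub>m n)"
  unfolding integral_mat_def by auto

lemma integral_mat_transpose: "integral_mat n A \<Longrightarrow> integral_mat n (transpose_mat A)"
  unfolding integral_mat_def by auto

lemma integral_mat_mult:
  assumes "integral_mat n A" "integral_mat n B"
  shows "integral_mat n (A * B)"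
  unfolding integral_mat_def
proof (intro conjI allI impI)
  have A: "A \<in> carrier_mat n n" and B: "B \<in> carrier_mat n n"
    using assms integral_mat_def by auto
  then show "A * B \<in> carrier_mat n n" by auto
  fix i j assume ij: "i < n" "j < n"
  have "(A * B) $$ (i,j) = (\<Sum>k\<in>{0..<n}. A $$ (i,k) * B $$ (k,j))"
    using A B ij by (simp add: scalar_prod_def)
  also have "av \<dots> \<le> 1"
    using assms ij by (intro av_sum_le) (auto simp: integral_mat_def intro!: mult_le_one)
  finally show "av ((A * B) $$ (i,j)) \<le> 1" .
qed

lemma av_det_integral_le_1:
  assumes "integral_mat n A"
  shows "av (det A) \<le> 1"
proof -
  have A: "A \<in> carrier_mat n n" using assms integral_mat_def by auto
  have "av (signof p * (\<Prod>i = 0..<n. A $$ (i, p i))) \<le> 1" if "p permutes {0..<n}" for p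
    using assms permutes_in_image[OF that] by (simp, intro av_prod_le_1) (auto simp: integral_mat_def)
  then show ?thesis unfolding det_def'[OF A] by (intro av_sum_le) auto
qed

lemma integral_unit_carrier: "integral_unit n P \<Longrightarrow> P \<in> carrier_mat n n"
  unfolding integral_unit_def integral_mat_def by auto

lemma integral_unit_one: "integral_unit n (1\<^sub>m n)"
  unfolding integral_unit_def using integral_mat_one by fastforce

lemma integral_unit_inverse:
  assumes "integral_unit n U"
  obtains U' where "integral_unit n U'" "U' * U = 1\<^sub>m n" "U * U' = 1\<^sub>m n"
proof -
  obtain U' where U': "integral_mat n U'" "U' * U = 1\<^sub>m n"
    using assms integral_unit_def by auto
  have "U * U' = 1\<^sub>m n"
    using U' assms mat_mult_left_right_inverse integral_unit_def integral_mat_def by blast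
  then show ?thesis
    using that U' assms integral_unit_def by auto
qed

lemma integral_unit_mult:
  assumes "integral_unit n A" "integral_unit n B"
  shows "integral_unit n (A * B)"
proof -
  obtain A' where A': "integral_unit n A'" "A' * A = 1\<^sub>m n" using integral_unit_inverse[OF assms(1)] by auto
  obtain B' where B': "integral_unit n B'" "B' * B = 1\<^sub>m n" using integral_unit_inverse[OF assms(2)] by auto
  have carrier: "A \<in> carrier_mat n n" "B \<in> carrier_mat n n" "A' \<in> carrier_mat n n" "B' \<in> carrier_mat n n"
    using assms A' B' integral_unit_carrier by auto
  have "(B' * A') * (A * B) = B' * ((A' * A) * B)"
    using carrier by (simp add: assoc_mult_mat[of _ n n _ n _ n])
  also have "\<dots> = 1\<^sub>m n" using carrier A' B' by simp
  finally show ?thesis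
    using assms A' B' integral_mat_mult unfolding integral_unit_def by blast
qed

lemma integral_unit_transpose:
  assumes "integral_unit n A"
  shows "integral_unit n (transpose_mat A)"
proof -
  obtain A' where A': "integral_unit n A'" "A * A' = 1\<^sub>m n" using integral_unit_inverse[OF assms] by auto
  then have "transpose_mat A' * transpose_mat A = 1\<^sub>m n"
    using transpose_mult[of A n n A' n] assms integral_unit_carrier by fastforce
  then show ?thesis
    using assms A' integral_mat_transpose unfolding integral_unit_def by blast
qed

lemma integral_unit_swaprows:
  assumes "k < n" "l < n"
  shows "integral_unit n (swaprows_mat n k l)"
proof -
  have "integral_mat n (swaprows_mat n k l)" unfolding integral_mat_def by auto
  then show ?thesis unfolding integral_unit_def using swaprows_mat_inv[OF assms] by blast
qed

lemma av_det_integral_unit: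
  assumes "integral_unit n P"
  shows "av (det P) = 1"
proof -
  obtain P' where P': "integral_unit n P'" "P' * P = 1\<^sub>m n" using integral_unit_inverse[OF assms] by auto
  then have "av (det P') * av (det P) = 1"
    using det_mult[of P' n P] assms integral_unit_carrier by (metis av_1 av_mult det_one)
  moreover have "av (det P') \<le> 1" "av (det P) \<le> 1"
    using av_det_integral_le_1 P' assms integral_unit_def by auto
  ultimately show ?thesis by (metis av_nonneg dual_order.antisym mult_left_le_one_le mult.commute)
qed

text \<open>The inverse is the adjugate divided by a unit, and cofactors of an integral matrix are integral.\<close>
lemma integral_unit_if_av_det:
  assumes P: "integral_mat n P" and det: "av (det P) = 1"
  shows "integral_unit n P"
proof -
  have carrier: "P \<in> carrier_mat n n" using P integral_mat_def by auto
  have "det P \<noteq> 0" using det by auto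
  define P' where "P' = inverse (det P) \<cdot>\<^sub>m adj_mat P"
  have "P' * P = inverse (det P) \<cdot>\<^sub>m (adj_mat P * P)"
    unfolding P'_def by (rule mult_smult_assoc_mat[OF adj_mat(1)[OF carrier] carrier])
  also have "\<dots> = 1\<^sub>m n" unfolding adj_mat(3)[OF carrier]
    using \<open>det P \<noteq> 0\<close> by (intro eq_matI) auto
  finally have inverse: "P' * P = 1\<^sub>m n" .
  have "av (P' $$ (i,j)) \<le> 1" if ij: "i < n" "j < n" for i j
  proof -
    have "integral_mat (n - 1) (mat_delete P j i)"
      using P mat_delete_carrier[OF carrier] unfolding integral_mat_def mat_delete_def by auto
    moreover have "av (P' $$ (i,j)) = av (det (mat_delete P j i))"
      unfolding P'_def adj_mat_def cofactor_def using carrier ij det by simp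
    ultimately show ?thesis using av_det_integral_le_1 by simp
  qed
  then have "integral_mat n P'"
    unfolding integral_mat_def P'_def using adj_mat(1)[OF carrier] by auto
  then show ?thesis unfolding integral_unit_def using P inverse by blast
qed

lemma vnorm_ge: "i < dim_vec x \<Longrightarrow> av (x $ i) \<le> vnorm av x"
  unfolding vnorm_def by (rule Max_ge) auto

lemma vnorm_le: "0 < dim_vec x \<Longrightarrow> (\<And>i. i < dim_vec x \<Longrightarrow> av (x $ i) \<le> c) \<Longrightarrow> vnorm av x \<le> c"
  unfolding vnorm_def by (rule Max.boundedI) auto

lemma vnorm_pos:
  assumes "x \<in> carrier_vec n" "x \<noteq> 0\<^sub>v n"
  shows "0 < vnorm av x"
proof -
  obtain i where i: "i < n" "x $ i \<noteq> 0"
    using assms by (metis eq_vecI carrier_vecD index_zero_vec)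
  then show ?thesis using av_pos[OF i(2)] vnorm_ge[of i x] assms by fastforce
qed

lemma vnorm_mult_vec_le:
  assumes P: "P \<in> carrier_mat n n" and x: "x \<in> carrier_vec n" and "0 < n"
    and bound: "\<And>i j. i < n \<Longrightarrow> j < n \<Longrightarrow> av (P $$ (i,j)) \<le> K"
  shows "vnorm av (P *\<^sub>v x) \<le> K * vnorm av x"
proof (rule vnorm_le)
  show "0 < dim_vec (P *\<^sub>v x)" using P \<open>0 < n\<close> by simp
  have "0 \<le> K" using bound[of 0 0] av_nonneg[of "P $$ (0,0)"] \<open>0 < n\<close> by linarith
  moreover have "0 \<le> vnorm av x"
    using order.trans[OF av_nonneg vnorm_ge[of 0 x]] x \<open>0 < n\<close> by simp
  ultimately have "av (P $$ (i,j) * x $ j) \<le> K * vnorm av x" if "i < n" "j < n" for i j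
    using that x by (simp, intro mult_mono) (auto intro: bound vnorm_ge)
  moreover fix i assume "i < dim_vec (P *\<^sub>v x)"
  ultimately show "av ((P *\<^sub>v x) $ i) \<le> K * vnorm av x"
    using P x \<open>0 \<le> K\<close> \<open>0 \<le> vnorm av x\<close> by (simp add: scalar_prod_def, intro av_sum_le) auto
qed

lemma vnorm_integral_unit_mult:
  assumes P: "integral_unit n P" and x: "x \<in> carrier_vec n" and "0 < n"
  shows "vnorm av (P *\<^sub>v x) = vnorm av x"
proof -
  obtain P' where P': "integral_unit n P'" "P' * P = 1\<^sub>m n" using integral_unit_inverse[OF P] by auto
  have carrier: "P \<in> carrier_mat n n" "P' \<in> carrier_mat n n" using P P' integral_unit_carrier by auto
  have "vnorm av (P *\<^sub>v x) \<le> 1 * vnorm av x"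
    using P x \<open>0 < n\<close> carrier by (intro vnorm_mult_vec_le) (auto simp: integral_unit_def integral_mat_def)
  moreover have "vnorm av (P' *\<^sub>v (P *\<^sub>v x)) \<le> 1 * vnorm av (P *\<^sub>v x)"
    using P' x \<open>0 < n\<close> carrier by (intro vnorm_mult_vec_le) (auto simp: integral_unit_def integral_mat_def)
  moreover have "P' *\<^sub>v (P *\<^sub>v x) = x"
    using assoc_mult_mat_vec[OF carrier(2,1) x, symmetric] P'(2) x by simp
  ultimately show ?thesis by simp
qed

lemma opnorm_ge:
  assumes P: "P \<in> carrier_mat n n" and "0 < n" and x: "x \<in> carrier_vec n" "x \<noteq> 0\<^sub>v n"
  shows "vnorm av (P *\<^sub>v x) / vnorm av x \<le> opnorm av P"
  unfolding opnorm_def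
proof (rule cSup_upper)
  define K where "K = (\<Sum>i<n. \<Sum>j<n. av (P $$ (i,j)))"
  have "av (P $$ (i,j)) \<le> K" if "i < n" "j < n" for i j
    unfolding K_def using that
    by (intro order.trans[OF member_le_sum[of j] member_le_sum[of i]]) (auto intro: sum_nonneg)
  then have "vnorm av (P *\<^sub>v y) / vnorm av y \<le> K" if "y \<in> carrier_vec n" "y \<noteq> 0\<^sub>v n" for y
    using vnorm_mult_vec_le[OF P that(1) \<open>0 < n\<close>] vnorm_pos[OF that] by (simp add: divide_le_eq)
  then show "bdd_above {vnorm av (P *\<^sub>v y) / vnorm av y | y. y \<in> carrier_vec (dim_col P) \<and> y \<noteq> 0\<^sub>v (dim_col P)}"
    using P by (intro bdd_aboveI[of _ K]) auto
qed (use P x in auto)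

lemma integral_mat_if_isom:
  assumes P: "P \<in> isom_group av n"
  shows "integral_mat n P"
  unfolding integral_mat_def
proof (intro conjI allI impI)
  show carrier: "P \<in> carrier_mat n n" using P isom_group_def by auto
  fix i j assume ij: "i < n" "j < n"
  have "vnorm av (unit_vec n j) = 1"
    using vnorm_ge[of j "unit_vec n j"] ij by (intro antisym vnorm_le) auto
  then have "av (P $$ (i,j)) \<le> vnorm av (P *\<^sub>v unit_vec n j) / vnorm av (unit_vec n j)"
    using vnorm_ge[of i "P *\<^sub>v unit_vec n j"] carrier ij by simp
  also have "\<dots> \<le> opnorm av P" using ij by (intro opnorm_ge[OF carrier]) auto
  finally show "av (P $$ (i,j)) \<le> 1" using P unfolding isom_group_def by simp
qed

lemma isom_group_iff_integral_unit:
  assumes "0 < n"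
  shows "P \<in> isom_group av n \<longleftrightarrow> integral_unit n P"
proof
  assume P: "P \<in> isom_group av n"
  then have "av (det P) = 1" by (simp add: isom_group_def)
  then show "integral_unit n P" using integral_mat_if_isom[OF P] integral_unit_if_av_det by blast
next
  assume P: "integral_unit n P"
  have carrier: "P \<in> carrier_mat n n" using integral_unit_carrier[OF P] .
  have ratio: "vnorm av (P *\<^sub>v x) / vnorm av x = 1" if "x \<in> carrier_vec n" "x \<noteq> 0\<^sub>v n" for x
    using vnorm_integral_unit_mult[OF P that(1) assms] vnorm_pos[OF that] by simp
  have "{vnorm av (P *\<^sub>v x) / vnorm av x | x. x \<in> carrier_vec (dim_col P) \<and> x \<noteq> 0\<^sub>v (dim_col P)} = {1}"
    using carrier unit_vec_nonzero[OF assms] by (auto simp: ratio intro!: exI[of _ "unit_vec n 0"])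
  then show "P \<in> isom_group av n"
    unfolding isom_group_def opnorm_def using carrier av_det_integral_unit[OF P] by simp
qed

definition max_minor :: "nat \<Rightarrow> nat \<Rightarrow> 'a mat \<Rightarrow> real" where
  "max_minor n s A = Max {av (det (submatrix A I J)) | I J.
     I \<subseteq> {..<n} \<and> J \<subseteq> {..<n} \<and> card I = s \<and> card J = s}"

lemma finite_minors:
  "finite {av (det (submatrix A I J)) | I J. I \<subseteq> {..<n} \<and> J \<subseteq> {..<n} \<and> card I = s \<and> card J = s}"
proof (rule finite_subset)
  show "{av (det (submatrix A I J)) | I J. I \<subseteq> {..<n} \<and> J \<subseteq> {..<n} \<and> card I = s \<and> card J = s}
    \<subseteq> (\<lambda>(I,J). av (det (submatrix A I J))) ` (Pow {..<n} \<times> Pow {..<n})" by auto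
qed simp

lemma max_minor_ge:
  "I \<subseteq> {..<n} \<Longrightarrow> J \<subseteq> {..<n} \<Longrightarrow> card I = s \<Longrightarrow> card J = s
    \<Longrightarrow> av (det (submatrix A I J)) \<le> max_minor n s A"
  unfolding max_minor_def by (rule Max_ge[OF finite_minors]) blast

lemma max_minor_nonneg: "s \<le> n \<Longrightarrow> 0 \<le> max_minor n s A"
  using order.trans[OF av_nonneg max_minor_ge[of "{..<s}" n "{..<s}" s A]] by simp

lemma max_minor_le:
  assumes "s \<le> n"
    and "\<And>I J. I \<subseteq> {..<n} \<Longrightarrow> J \<subseteq> {..<n} \<Longrightarrow> card I = s \<Longrightarrow> card J = s
      \<Longrightarrow> av (det (submatrix A I J)) \<le> c"
  shows "max_minor n s A \<le> c"
  unfolding max_minor_def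
proof (rule Max.boundedI[OF finite_minors])
  have "av (det (submatrix A {..<s} {..<s})) \<in> {av (det (submatrix A I J)) | I J.
      I \<subseteq> {..<n} \<and> J \<subseteq> {..<n} \<and> card I = s \<and> card J = s}"
    using assms(1) by (auto intro!: exI[of _ "{..<s}"])
  then show "{av (det (submatrix A I J)) | I J.
      I \<subseteq> {..<n} \<and> J \<subseteq> {..<n} \<and> card I = s \<and> card J = s} \<noteq> {}" by blast
qed (use assms(2) in blast)

lemma av_det_rows_le_max_minor:
  assumes A: "A \<in> carrier_mat n n" and J: "J \<subseteq> {..<n}" "card J = s" and "s \<le> n"
    and f: "\<And>a. a < s \<Longrightarrow> f a < n"
  shows "av (det (mat\<^sub>r s s (\<lambda>a. row (submatrix A UNIV J) (f a)))) \<le> max_minor n s A"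
proof (cases "inj_on f {0..<s}")
  case False
  then obtain a b where ab: "a < s" "b < s" "a \<noteq> b" "f a = f b" unfolding inj_on_def by auto
  have "dim_col (submatrix A UNIV J) = s"
    using A J card_Collect_less_in[OF J(1)] by (simp add: dim_submatrix)
  then have "det (mat\<^sub>r s s (\<lambda>a. row (submatrix A UNIV J) (f a))) = 0"
    using ab by (intro det_identical_rows[OF mat_row_carrierI ab(3,1,2)]) simp
  then show ?thesis using max_minor_nonneg[OF \<open>s \<le> n\<close>] by simp
next
  case True
  obtain g where "det (mat\<^sub>r s s (\<lambda>a. row (submatrix A UNIV J) (f a)))
      = signof g * det (submatrix A (f ` {0..<s}) J)"
    using det_rows_of_submatrix[OF A J True f] by blast
  moreover have "f ` {0..<s} \<subseteq> {..<n}" "card (f ` {0..<s}) = s"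
    using f card_image[OF True] by auto
  ultimately show ?thesis using max_minor_ge[of _ n J s A] J by simp
qed

lemma av_minor_integral_mult_le:
  assumes X: "integral_mat n X" and A: "A \<in> carrier_mat n n"
    and I: "I \<subseteq> {..<n}" "card I = s" and J: "J \<subseteq> {..<n}" "card J = s" and "s \<le> n"
  shows "av (det (submatrix (X * A) I J)) \<le> max_minor n s A"
proof -
  have term_le: "av ((\<Prod>i\<in>{0..<s}. X $$ (pick I i, f i)) * det (mat\<^sub>r s s (\<lambda>i. row (submatrix A UNIV J) (f i))))
      \<le> max_minor n s A" if f: "\<And>i. i < s \<Longrightarrow> f i < n" for f
  proof -
    have "av (\<Prod>i\<in>{0..<s}. X $$ (pick I i, f i)) \<le> 1"
      using X f pick_less[OF I(1)] I(2) by (intro av_prod_le_1) (auto simp: integral_mat_def)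
    moreover have "av (det (mat\<^sub>r s s (\<lambda>i. row (submatrix A UNIV J) (f i)))) \<le> max_minor n s A"
      by (rule av_det_rows_le_max_minor[OF A J \<open>s \<le> n\<close> f])
    ultimately show ?thesis
      by (simp add: mult_left_le_one_le order_trans[OF mult_left_le_one_le])
  qed
  have X_carrier: "X \<in> carrier_mat n n" using X integral_mat_def by auto
  show ?thesis
    unfolding det_submatrix_mult_expansion[OF X_carrier A I J]
    using term_le max_minor_nonneg[OF \<open>s \<le> n\<close>] by (intro av_sum_le) auto
qed

lemma max_minor_integral_mult_left:
  "integral_mat n X \<Longrightarrow> A \<in> carrier_mat n n \<Longrightarrow> s \<le> n \<Longrightarrow> max_minor n s (X * A) \<le> max_minor n s A"
  by (intro max_minor_le av_minor_integral_mult_le)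

lemma max_minor_transpose:
  assumes A: "A \<in> carrier_mat n n" and "s \<le> n"
  shows "max_minor n s (transpose_mat A) = max_minor n s A"
proof -
  have le: "max_minor n s (transpose_mat B) \<le> max_minor n s B" if B: "B \<in> carrier_mat n n" for B
  proof (rule max_minor_le[OF \<open>s \<le> n\<close>])
    fix I J assume IJ: "I \<subseteq> {..<n}" "J \<subseteq> {..<n}" "card I = s" "card J = s"
    have "det (submatrix (transpose_mat B) I J) = det (submatrix B J I)"
      unfolding submatrix_transpose
      using submatrix_carrier[OF B IJ(2,1)] IJ by (intro det_transpose) simp
    then show "av (det (submatrix (transpose_mat B) I J)) \<le> max_minor n s B"
      using max_minor_ge[OF IJ(2,1,4,3)] by simp
  qed
  show ?thesis using le[OF A] le[of "transpose_mat A"] A by fastforce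
qed

lemma max_minor_integral_mult_right:
  assumes X: "integral_mat n X" and A: "A \<in> carrier_mat n n" and "s \<le> n"
  shows "max_minor n s (A * X) \<le> max_minor n s A"
proof -
  have X_carrier: "X \<in> carrier_mat n n" using X integral_mat_def by auto
  have "max_minor n s (A * X) = max_minor n s (transpose_mat X * transpose_mat A)"
    using max_minor_transpose[of "A * X" n s] transpose_mult[OF A X_carrier] A X_carrier \<open>s \<le> n\<close> by simp
  also have "\<dots> \<le> max_minor n s (transpose_mat A)"
    using integral_mat_transpose[OF X] A \<open>s \<le> n\<close> by (intro max_minor_integral_mult_left) auto
  also have "\<dots> = max_minor n s A" using max_minor_transpose[OF A \<open>s \<le> n\<close>] .
  finally show ?thesis .
qed

lemma max_minor_integral_unit_mult:
  assumes P: "integral_unit n P" and Q: "integral_unit n Q" and A: "A \<in> carrier_mat n n" and "s \<le> n"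
  shows "max_minor n s (P * A * Q) = max_minor n s A"
proof -
  have both_sides_le: "max_minor n s (U * B * V) \<le> max_minor n s B"
    if "integral_unit n U" "integral_unit n V" "B \<in> carrier_mat n n" for U V B
  proof -
    have "U * B \<in> carrier_mat n n" using integral_unit_carrier[OF that(1)] that(3) by simp
    then have "max_minor n s (U * B * V) \<le> max_minor n s (U * B)"
      using that(2) \<open>s \<le> n\<close> by (intro max_minor_integral_mult_right) (auto simp: integral_unit_def)
    also have "\<dots> \<le> max_minor n s B"
      using that \<open>s \<le> n\<close> by (intro max_minor_integral_mult_left) (auto simp: integral_unit_def)
    finally show ?thesis .
  qed
  obtain P' where P': "integral_unit n P'" "P' * P = 1\<^sub>m n" using integral_unit_inverse[OF P] by auto
  obtain Q' where Q': "integral_unit n Q'" "Q * Q' = 1\<^sub>m n" using integral_unit_inverse[OF Q] by auto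
  have carrier: "P \<in> carrier_mat n n" "Q \<in> carrier_mat n n" "P' \<in> carrier_mat n n" "Q' \<in> carrier_mat n n"
    using P Q P' Q' integral_unit_carrier by auto
  have "P' * (P * A * Q) * Q' = (P' * P) * A * (Q * Q')"
    using carrier A by (simp add: assoc_mult_mat[of _ n n _ n _ n])
  then have "A = P' * (P * A * Q) * Q'" using P'(2) Q'(2) A by simp
  then have "max_minor n s A \<le> max_minor n s (P * A * Q)"
    using both_sides_le[OF P'(1) Q'(1), of "P * A * Q"] carrier A by simp
  then show ?thesis using both_sides_le[OF P Q A] by simp
qed

lemma max_minor_diag_of:
  assumes "s \<le> n" and decreasing: "\<And>i j. i \<le> j \<Longrightarrow> j < n \<Longrightarrow> av (\<sigma> j) \<le> av (\<sigma> i)"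
  shows "max_minor n s (diag_of n \<sigma>) = (\<Prod>i<s. av (\<sigma> i))"
proof (rule antisym)
  show "max_minor n s (diag_of n \<sigma>) \<le> (\<Prod>i<s. av (\<sigma> i))"
  proof (rule max_minor_le[OF \<open>s \<le> n\<close>])
    fix I J assume I: "I \<subseteq> {..<n}" and J: "J \<subseteq> {..<n}" and card: "card I = s" "card J = s"
    show "av (det (submatrix (diag_of n \<sigma>) I J)) \<le> (\<Prod>i<s. av (\<sigma> i))"
    proof (cases "I = J")
      case True
      have "av (det (submatrix (diag_of n \<sigma>) I J)) = (\<Prod>a<s. av (\<sigma> (pick I a)))"
        unfolding True det_submatrix_diag_of[OF J] av_prod card(2) ..
      also have "\<dots> \<le> (\<Prod>a<s. av (\<sigma> a))"
        using pick_ge[of _ I] pick_less[OF I] card by (intro prod_mono conjI decreasing) auto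
      finally show ?thesis .
    next
      case False
      then have "det (submatrix (diag_of n \<sigma>) I J) = 0"
        using det_submatrix_diag_of_eq_0[OF I J] card by simp
      then show ?thesis by (simp add: prod_nonneg)
    qed
  qed
next
  have "{..<s} \<subseteq> {..<n}" using \<open>s \<le> n\<close> by auto
  then have "(\<Prod>i<s. av (\<sigma> i)) = av (det (submatrix (diag_of n \<sigma>) {..<s} {..<s}))"
    unfolding det_submatrix_diag_of[OF \<open>{..<s} \<subseteq> {..<n}\<close>] av_prod
    by (intro prod.cong) (auto simp: pick_lessThan)
  also have "\<dots> \<le> max_minor n s (diag_of n \<sigma>)"
    using \<open>{..<s} \<subseteq> {..<n}\<close> by (intro max_minor_ge) auto
  finally show "(\<Prod>i<s. av (\<sigma> i)) \<le> max_minor n s (diag_of n \<sigma>)" .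
qed

definition integrally_equiv :: "nat \<Rightarrow> 'a mat \<Rightarrow> 'a mat \<Rightarrow> bool" where
  "integrally_equiv n A B \<longleftrightarrow> (\<exists>U V. integral_unit n U \<and> integral_unit n V \<and> B = U * A * V)"

lemma integrally_equiv_refl: "A \<in> carrier_mat n n \<Longrightarrow> integrally_equiv n A A"
  unfolding integrally_equiv_def using integral_unit_one by fastforce

lemma integrally_equiv_trans:
  assumes A: "A \<in> carrier_mat n n" and "integrally_equiv n A B" "integrally_equiv n B C"
  shows "integrally_equiv n A C"
proof -
  obtain U V where UV: "integral_unit n U" "integral_unit n V" "B = U * A * V"
    using assms(2) integrally_equiv_def by auto
  obtain U' V' where UV': "integral_unit n U'" "integral_unit n V'" "C = U' * B * V'"
    using assms(3) integrally_equiv_def by auto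
  have "U \<in> carrier_mat n n" "V \<in> carrier_mat n n" "U' \<in> carrier_mat n n" "V' \<in> carrier_mat n n"
    using UV UV' integral_unit_carrier by auto
  then have "C = (U' * U) * A * (V * V')"
    unfolding UV'(3) UV(3) using A by (simp add: assoc_mult_mat[of _ n n _ n _ n])
  then show ?thesis unfolding integrally_equiv_def using integral_unit_mult UV UV' by blast
qed

lemma integrally_equiv_sym:
  assumes A: "A \<in> carrier_mat n n" and "integrally_equiv n A B"
  shows "integrally_equiv n B A"
proof -
  obtain U V where UV: "integral_unit n U" "integral_unit n V" "B = U * A * V"
    using assms(2) integrally_equiv_def by auto
  obtain U' where U': "integral_unit n U'" "U' * U = 1\<^sub>m n" using integral_unit_inverse[OF UV(1)] by auto
  obtain V' where V': "integral_unit n V'" "V * V' = 1\<^sub>m n" using integral_unit_inverse[OF UV(2)] by auto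
  have "U \<in> carrier_mat n n" "V \<in> carrier_mat n n" "U' \<in> carrier_mat n n" "V' \<in> carrier_mat n n"
    using UV U' V' integral_unit_carrier by auto
  then have "U' * B * V' = (U' * U) * A * (V * V')"
    unfolding UV(3) using A by (simp add: assoc_mult_mat[of _ n n _ n _ n])
  then have "A = U' * B * V'" using U' V' A by simp
  then show ?thesis unfolding integrally_equiv_def using U' V' by blast
qed

lemma integrally_equiv_carrier:
  "A \<in> carrier_mat n n \<Longrightarrow> integrally_equiv n A B \<Longrightarrow> B \<in> carrier_mat n n"
  unfolding integrally_equiv_def using integral_unit_carrier by (metis mult_carrier_mat)

lemma av_det_integrally_equiv:
  assumes A: "A \<in> carrier_mat n n" and "integrally_equiv n A B"
  shows "av (det B) = av (det A)"
proof -
  obtain U V where UV: "integral_unit n U" "integral_unit n V" "B = U * A * V"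
    using assms(2) integrally_equiv_def by auto
  then have "det B = det U * det A * det V"
    using A integral_unit_carrier[OF UV(1)] integral_unit_carrier[OF UV(2)] by (simp add: det_mult[of _ n])
  then show ?thesis using av_det_integral_unit UV by simp
qed

lemma integral_unit_elim_below:
  assumes "k < n" and c: "\<And>i. k < i \<Longrightarrow> i < n \<Longrightarrow> av (c i) \<le> 1"
  shows "integral_unit n (elim_below n k c)"
proof -
  have "elim_below n k (\<lambda>i. - c i) * elim_below n k c = 1\<^sub>m n"
  proof (rule eq_matI)
    fix i j assume "i < dim_row (1\<^sub>m n :: 'a mat)" "j < dim_col (1\<^sub>m n :: 'a mat)"
    then have ij: "i < n" "j < n" by auto
    then show "(elim_below n k (\<lambda>i. - c i) * elim_below n k c) $$ (i,j) = 1\<^sub>m n $$ (i,j)"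
      unfolding elim_below_mult_index[OF elim_below_carrier \<open>k < n\<close> ij] using \<open>k < n\<close>
      by (auto simp: elim_below_def)
  qed (simp_all add: elim_below_def)
  moreover have "integral_mat n (elim_below n k c)" "integral_mat n (elim_below n k (\<lambda>i. - c i))"
    using c by (auto simp: integral_mat_def elim_below_def)
  ultimately show ?thesis unfolding integral_unit_def by blast
qed

text \<open>The state after \<open>k\<close> steps of Gaussian elimination with full pivoting: the first \<open>k\<close> rows
  and columns are diagonal with nonzero entries of decreasing modulus, and the remaining block
  is dominated by the last pivot.\<close>
definition diagonal_upto :: "nat \<Rightarrow> nat \<Rightarrow> 'a mat \<Rightarrow> bool" where
  "diagonal_upto n k A \<longleftrightarrow> A \<in> carrier_mat n n \<and> det A \<noteq> 0 \<and>
    (\<forall>i j. i < n \<longrightarrow> j < n \<longrightarrow> (i < k \<or> j < k) \<longrightarrow> i \<noteq> j \<longrightarrow> A $$ (i,j) = 0) \<and>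
    (\<forall>i<k. A $$ (i,i) \<noteq> 0) \<and>
    (\<forall>i j. i \<le> j \<longrightarrow> j < k \<longrightarrow> av (A $$ (j,j)) \<le> av (A $$ (i,i))) \<and>
    (\<forall>i j. 0 < k \<longrightarrow> k \<le> i \<longrightarrow> i < n \<longrightarrow> k \<le> j \<longrightarrow> j < n \<longrightarrow> av (A $$ (i,j)) \<le> av (A $$ (k-1,k-1)))"

lemma diagonal_upto_0: "A \<in> carrier_mat n n \<Longrightarrow> det A \<noteq> 0 \<Longrightarrow> diagonal_upto n 0 A"
  unfolding diagonal_upto_def by auto

lemma diagonal_upto_n_eq_diag_of:
  assumes "diagonal_upto n n A"
  shows "A = diag_of n (\<lambda>i. A $$ (i,i))"
  using assms unfolding diagonal_upto_def diag_of_def by (intro eq_matI) auto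

lemma max_entry_exists:
  assumes "k < n"
  obtains i0 j0 where "k \<le> i0" "i0 < n" "k \<le> j0" "j0 < n"
    "\<And>i j. k \<le> i \<Longrightarrow> i < n \<Longrightarrow> k \<le> j \<Longrightarrow> j < n \<Longrightarrow> av (A $$ (i,j)) \<le> av (A $$ (i0,j0))"
proof -
  let ?S = "{k..<n} \<times> {k..<n}" and ?f = "\<lambda>x. av (A $$ x)"
  obtain x where x: "x \<in> ?S" "Max (?f ` ?S) = ?f x"
    using obtains_MAX[of ?S ?f] assms by auto
  have "?f y \<le> ?f x" if "y \<in> ?S" for y
    unfolding x(2)[symmetric] using that by (intro Max_ge) auto
  then show ?thesis using that x(1) by (cases x) auto
qed

lemma integrally_equiv_swap:
  "A \<in> carrier_mat n n \<Longrightarrow> k < n \<Longrightarrow> i0 < n \<Longrightarrow> j0 < n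
    \<Longrightarrow> integrally_equiv n A (swaprows_mat n k i0 * A * swaprows_mat n k j0)"
  unfolding integrally_equiv_def using integral_unit_swaprows by blast

lemma diagonal_upto_swap:
  assumes A: "diagonal_upto n k A" and ij0: "k \<le> i0" "i0 < n" "k \<le> j0" "j0 < n"
  shows "diagonal_upto n k (swaprows_mat n k i0 * A * swaprows_mat n k j0)" (is "diagonal_upto n k ?B")
proof -
  have carrier: "A \<in> carrier_mat n n" and "det A \<noteq> 0"
    and zero: "\<And>i j. i < n \<Longrightarrow> j < n \<Longrightarrow> i < k \<or> j < k \<Longrightarrow> i \<noteq> j \<Longrightarrow> A $$ (i,j) = 0"
    using A unfolding diagonal_upto_def by auto
  let ?r = "Transposition.transpose k i0" and ?c = "Transposition.transpose k j0"
  have "k < n" using ij0 by simp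
  have equiv: "integrally_equiv n A ?B" using integrally_equiv_swap[OF carrier \<open>k < n\<close>] ij0 by simp
  have B_index: "?B $$ (i,j) = A $$ (?r i, ?c j)" if "i < n" "j < n" for i j
    using swaprows_swapcols_index[OF carrier \<open>k < n\<close> \<open>i0 < n\<close> \<open>j0 < n\<close> that] .
  have r: "?r i < n" "i < k \<Longrightarrow> ?r i = i" "k \<le> i \<Longrightarrow> k \<le> ?r i" if "i < n" for i
    using that ij0 by (auto simp: transpose_def)
  have c: "?c j < n" "j < k \<Longrightarrow> ?c j = j" "k \<le> j \<Longrightarrow> k \<le> ?c j" if "j < n" for j
    using that ij0 by (auto simp: transpose_def)
  have B_diag: "?B $$ (i,i) = A $$ (i,i)" if "i < k" for i
    using that B_index r c \<open>k < n\<close> by simp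
  have "det ?B \<noteq> 0"
    using av_det_integrally_equiv[OF carrier equiv] \<open>det A \<noteq> 0\<close> by (metis av_eq_0_iff)
  moreover have "?B $$ (i,j) = 0" if "i < n" "j < n" "i < k \<or> j < k" "i \<noteq> j" for i j
    using that B_index r[OF that(1)] c[OF that(2)] zero[OF r(1) c(1), of i j]
    by (cases "i < k"; cases "j < k") auto
  moreover have "av (?B $$ (i,j)) \<le> av (?B $$ (k-1,k-1))"
    if "0 < k" "k \<le> i" "i < n" "k \<le> j" "j < n" for i j
    using that A B_index r c B_diag[of "k-1"] unfolding diagonal_upto_def by auto
  ultimately show ?thesis
    using A B_diag integrally_equiv_carrier[OF carrier equiv] unfolding diagonal_upto_def by auto
qed

lemma pivot_to_corner:
  assumes A: "diagonal_upto n k A" and "k < n"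
  obtains B where "integrally_equiv n A B" "diagonal_upto n k B" "B $$ (k,k) \<noteq> 0"
    "\<And>i j. k \<le> i \<Longrightarrow> i < n \<Longrightarrow> k \<le> j \<Longrightarrow> j < n \<Longrightarrow> av (B $$ (i,j)) \<le> av (B $$ (k,k))"
proof -
  have carrier: "A \<in> carrier_mat n n" and "det A \<noteq> 0"
    and zero: "\<And>i j. i < n \<Longrightarrow> j < n \<Longrightarrow> i < k \<or> j < k \<Longrightarrow> i \<noteq> j \<Longrightarrow> A $$ (i,j) = 0"
    using A unfolding diagonal_upto_def by auto
  obtain i0 j0 where ij0: "k \<le> i0" "i0 < n" "k \<le> j0" "j0 < n"
    and max: "\<And>i j. k \<le> i \<Longrightarrow> i < n \<Longrightarrow> k \<le> j \<Longrightarrow> j < n \<Longrightarrow> av (A $$ (i,j)) \<le> av (A $$ (i0,j0))"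
    using max_entry_exists[OF \<open>k < n\<close>] by blast
  have "A $$ (i0,j0) \<noteq> 0"
  proof
    assume "A $$ (i0,j0) = 0"
    then have "A $$ (k,j) = 0" if "j < n" for j
      using zero[of k j] max[of k j] that \<open>k < n\<close> by (cases "j < k") (auto dest: antisym[OF _ av_nonneg])
    then show False using det_zero_rowI[OF carrier \<open>k < n\<close>] \<open>det A \<noteq> 0\<close> by blast
  qed
  let ?B = "swaprows_mat n k i0 * A * swaprows_mat n k j0"
  have B_index: "?B $$ (i,j) = A $$ (Transposition.transpose k i0 i, Transposition.transpose k j0 j)"
    if "i < n" "j < n" for i j
    using swaprows_swapcols_index[OF carrier \<open>k < n\<close> \<open>i0 < n\<close> \<open>j0 < n\<close> that] .
  have "av (?B $$ (i,j)) \<le> av (?B $$ (k,k))" if "k \<le> i" "i < n" "k \<le> j" "j < n" for i j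
    using that ij0 B_index max \<open>k < n\<close> by (simp add: transpose_def)
  moreover have "?B $$ (k,k) \<noteq> 0" using B_index[of k k] \<open>k < n\<close> \<open>A $$ (i0,j0) \<noteq> 0\<close> by simp
  ultimately show ?thesis
    using that integrally_equiv_swap[OF carrier \<open>k < n\<close> \<open>i0 < n\<close> \<open>j0 < n\<close>] diagonal_upto_swap[OF A ij0]
    by blast
qed

lemma integrally_equiv_eliminate:
  assumes B: "B \<in> carrier_mat n n" and "k < n" and "B $$ (k,k) \<noteq> 0"
    and col: "\<And>i. k < i \<Longrightarrow> i < n \<Longrightarrow> av (B $$ (i,k)) \<le> av (B $$ (k,k))"
    and row: "\<And>j. k < j \<Longrightarrow> j < n \<Longrightarrow> av (B $$ (k,j)) \<le> av (B $$ (k,k))"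
  shows "integrally_equiv n B (eliminate n k B)"
proof -
  have p: "0 < av (B $$ (k,k))" using av_pos[OF \<open>B $$ (k,k) \<noteq> 0\<close>] .
  have "integral_unit n (elim_below n k (\<lambda>i. - (B $$ (i,k) / B $$ (k,k))))"
    using col p by (intro integral_unit_elim_below[OF \<open>k < n\<close>]) (simp add: divide_le_eq)
  moreover have "integral_unit n (elim_below n k (\<lambda>j. - (B $$ (k,j) / B $$ (k,k))))"
    using row p by (intro integral_unit_elim_below[OF \<open>k < n\<close>]) (simp add: divide_le_eq)
  ultimately show ?thesis
    unfolding integrally_equiv_def eliminate_def using integral_unit_transpose by blast
qed

lemma eliminate_eq_0:
  assumes B: "diagonal_upto n k B" and "k < n" "B $$ (k,k) \<noteq> 0"
    and "i < n" "j < n" "i \<le> k \<or> j \<le> k" "i \<noteq> j"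
  shows "eliminate n k B $$ (i,j) = 0"
proof -
  have carrier: "B \<in> carrier_mat n n"
    and zero: "\<And>i j. i < n \<Longrightarrow> j < n \<Longrightarrow> i < k \<or> j < k \<Longrightarrow> i \<noteq> j \<Longrightarrow> B $$ (i,j) = 0"
    using B unfolding diagonal_upto_def by auto
  show ?thesis
    using assms zero[of i j] zero[of i k] zero[of k j] eliminate_index[OF carrier \<open>k < n\<close> _ _ \<open>B $$ (k,k) \<noteq> 0\<close>, of i j]
    by (cases "i < k"; cases "j < k"; cases "i = k"; cases "j = k") auto
qed

lemma av_eliminate_le:
  assumes B: "B \<in> carrier_mat n n" and "k < n" and p: "B $$ (k,k) \<noteq> 0"
    and pivot_max: "\<And>i j. k \<le> i \<Longrightarrow> i < n \<Longrightarrow> k \<le> j \<Longrightarrow> j < n \<Longrightarrow> av (B $$ (i,j)) \<le> av (B $$ (k,k))"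
    and "k < i" "i < n" "k < j" "j < n"
  shows "av (eliminate n k B $$ (i,j)) \<le> av (B $$ (k,k))"
proof -
  have "av (B $$ (i,k) * B $$ (k,j)) \<le> av (B $$ (k,k)) * av (B $$ (k,k))"
    using assms pivot_max[of i k] pivot_max[of k j] by (simp add: mult_mono)
  then have "av (B $$ (i,k) * B $$ (k,j) / B $$ (k,k)) \<le> av (B $$ (k,k))"
    using av_pos[OF p] by (simp add: divide_le_eq)
  moreover have "av (B $$ (i,j)) \<le> av (B $$ (k,k))" using assms by (intro pivot_max) auto
  moreover have "eliminate n k B $$ (i,j) = B $$ (i,j) - B $$ (i,k) * B $$ (k,j) / B $$ (k,k)"
    using assms eliminate_index[OF B \<open>k < n\<close> _ _ p, of i j] by simp
  ultimately show ?thesis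
    using av_diff_le_max[of "B $$ (i,j)" "B $$ (i,k) * B $$ (k,j) / B $$ (k,k)"] by simp
qed

lemma diagonal_upto_eliminate:
  assumes B: "diagonal_upto n k B" and "k < n" and p: "B $$ (k,k) \<noteq> 0"
    and pivot_max: "\<And>i j. k \<le> i \<Longrightarrow> i < n \<Longrightarrow> k \<le> j \<Longrightarrow> j < n \<Longrightarrow> av (B $$ (i,j)) \<le> av (B $$ (k,k))"
  shows "diagonal_upto n (Suc k) (eliminate n k B)"
proof -
  let ?E = "eliminate n k B"
  have carrier: "B \<in> carrier_mat n n" and "det B \<noteq> 0"
    and nonzero: "\<And>i. i < k \<Longrightarrow> B $$ (i,i) \<noteq> 0"
    and decreasing: "\<And>i j. i \<le> j \<Longrightarrow> j < k \<Longrightarrow> av (B $$ (j,j)) \<le> av (B $$ (i,i))"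
    and bound: "\<And>i j. 0 < k \<Longrightarrow> k \<le> i \<Longrightarrow> i < n \<Longrightarrow> k \<le> j \<Longrightarrow> j < n
      \<Longrightarrow> av (B $$ (i,j)) \<le> av (B $$ (k-1,k-1))"
    using B unfolding diagonal_upto_def by auto
  have equiv: "integrally_equiv n B ?E"
    using pivot_max \<open>k < n\<close> by (intro integrally_equiv_eliminate[OF carrier \<open>k < n\<close> p]) auto
  have E_diag: "?E $$ (i,i) = B $$ (i,i)" if "i \<le> k" for i
    using that eliminate_index[OF carrier \<open>k < n\<close> _ _ p, of i i] \<open>k < n\<close> by simp
  have "av (?E $$ (j,j)) \<le> av (?E $$ (i,i))" if "i \<le> j" "j < Suc k" for i j
  proof (cases "j < k")
    case False
    then have "j = k" using that by simp
    moreover have "av (B $$ (k,k)) \<le> av (B $$ (i,i))" if "i < k"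
      using bound[of k k] decreasing[of i "k-1"] \<open>k < n\<close> that by fastforce
    ultimately show ?thesis using E_diag \<open>i \<le> j\<close> by (cases "i = k") auto
  qed (use that E_diag decreasing in simp)
  moreover have "det ?E \<noteq> 0"
    using av_det_integrally_equiv[OF carrier equiv] \<open>det B \<noteq> 0\<close> by (metis av_eq_0_iff)
  moreover have "?E $$ (i,i) \<noteq> 0" if "i < Suc k" for i
    using that E_diag nonzero p by (cases "i = k") auto
  ultimately show ?thesis
    unfolding diagonal_upto_def
    using integrally_equiv_carrier[OF carrier equiv] eliminate_eq_0[OF B \<open>k < n\<close> p]
      av_eliminate_le[OF carrier \<open>k < n\<close> p pivot_max] E_diag[of k]
    by auto
qed

lemma diagonal_upto_Suc:
  assumes A: "diagonal_upto n k A" and "k < n"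
  obtains E where "integrally_equiv n A E" "diagonal_upto n (Suc k) E"
proof -
  obtain B where B: "integrally_equiv n A B" "diagonal_upto n k B" "B $$ (k,k) \<noteq> 0"
    and pivot_max: "\<And>i j. k \<le> i \<Longrightarrow> i < n \<Longrightarrow> k \<le> j \<Longrightarrow> j < n \<Longrightarrow> av (B $$ (i,j)) \<le> av (B $$ (k,k))"
    using pivot_to_corner[OF assms] by blast
  have carrier: "A \<in> carrier_mat n n" "B \<in> carrier_mat n n"
    using A B(2) unfolding diagonal_upto_def by auto
  have "integrally_equiv n B (eliminate n k B)"
    using pivot_max \<open>k < n\<close> by (intro integrally_equiv_eliminate[OF carrier(2) \<open>k < n\<close> B(3)]) auto
  then show ?thesis
    using that integrally_equiv_trans[OF carrier(1) B(1)] diagonal_upto_eliminate[OF B(2) \<open>k < n\<close> B(3) pivot_max]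
    by blast
qed

lemma diagonal_form_exists:
  assumes T: "T \<in> carrier_mat n n" and "det T \<noteq> 0"
  obtains \<sigma> where "integrally_equiv n T (diag_of n \<sigma>)" "\<And>i. i < n \<Longrightarrow> \<sigma> i \<noteq> 0"
    "\<And>i j. i \<le> j \<Longrightarrow> j < n \<Longrightarrow> av (\<sigma> j) \<le> av (\<sigma> i)"
proof -
  have "\<exists>A. integrally_equiv n T A \<and> diagonal_upto n k A" if "k \<le> n" for k
    using that
  proof (induction k)
    case 0
    then show ?case using diagonal_upto_0[OF assms] integrally_equiv_refl[OF T] by blast
  next
    case (Suc k)
    then obtain A where A: "integrally_equiv n T A" "diagonal_upto n k A" by auto
    obtain E where "integrally_equiv n A E" "diagonal_upto n (Suc k) E"
      using diagonal_upto_Suc[OF A(2)] Suc.prems by auto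
    then show ?case using integrally_equiv_trans[OF T A(1)] by blast
  qed
  then obtain A where "integrally_equiv n T A" "diagonal_upto n n A" by blast
  then show ?thesis
    using that[of "\<lambda>i. A $$ (i,i)"] diagonal_upto_n_eq_diag_of unfolding diagonal_upto_def by auto
qed

lemma svd_values_exist:
  assumes T: "T \<in> carrier_mat n n" and "det T \<noteq> 0" and "0 < n"
  shows "\<exists>\<alpha>. is_svd_values av T \<alpha>"
proof -
  obtain \<sigma> where equiv: "integrally_equiv n T (diag_of n \<sigma>)" and nonzero: "\<And>i. i < n \<Longrightarrow> \<sigma> i \<noteq> 0"
    and decreasing: "\<And>i j. i \<le> j \<Longrightarrow> j < n \<Longrightarrow> av (\<sigma> j) \<le> av (\<sigma> i)"
    using diagonal_form_exists[OF assms(1,2)] by blast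
  obtain P Q where PQ: "integral_unit n P" "integral_unit n Q" "T = P * diag_of n \<sigma> * Q"
    using integrally_equiv_sym[OF T equiv] unfolding integrally_equiv_def by blast
  have "dim_row T = n" using T by simp
  then have "is_svd_values av T (map (\<lambda>i. av (\<sigma> i)) [0..<n])"
    unfolding is_svd_values_def Let_def \<open>dim_row T = n\<close> isom_group_iff_integral_unit[OF \<open>0 < n\<close>]
    using PQ nonzero decreasing av_pos by (intro conjI exI[of _ P] exI[of _ Q] exI[of _ \<sigma>]) auto
  then show ?thesis ..
qed

lemma prod_svd_values_eq_max_minor:
  assumes svd: "is_svd_values av T \<alpha>" and T: "T \<in> carrier_mat n n" and "s \<le> n" and "0 < n"
  shows "(\<Prod>i<s. \<alpha> ! i) = max_minor n s T"
proof -
  have "dim_row T = n" using T by simp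
  then obtain P Q \<sigma> where "P \<in> isom_group av n" "Q \<in> isom_group av n" "T = P * diag_of n \<sigma> * Q"
    and \<alpha>: "\<And>i. i < n \<Longrightarrow> av (\<sigma> i) = \<alpha> ! i"
    and decreasing: "\<And>i j. i \<le> j \<Longrightarrow> j < n \<Longrightarrow> \<alpha> ! j \<le> \<alpha> ! i"
    using svd unfolding is_svd_values_def Let_def by blast
  then have "max_minor n s T = max_minor n s (diag_of n \<sigma>)"
    using max_minor_integral_unit_mult isom_group_iff_integral_unit[OF \<open>0 < n\<close>] \<open>s \<le> n\<close>
    by (simp add: diag_of_def)
  also have "\<dots> = (\<Prod>i<s. av (\<sigma> i))"
    using \<alpha> decreasing by (intro max_minor_diag_of[OF \<open>s \<le> n\<close>]) simp
  also have "\<dots> = (\<Prod>i<s. \<alpha> ! i)"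
    using \<alpha> \<open>s \<le> n\<close> by (intro prod.cong) auto
  finally show ?thesis by simp
qed

text \<open>The partial products \<open>\<alpha>_1 \<cdots> \<alpha>_s\<close> are determined by \<open>T\<close> and are positive, so each \<open>\<alpha>_s\<close> is.\<close>
lemma svd_values_unique:
  assumes \<alpha>: "is_svd_values av T \<alpha>" and \<beta>: "is_svd_values av T \<beta>" and T: "T \<in> carrier_mat n n"
  shows "\<alpha> = \<beta>"
proof -
  have length: "length \<alpha> = n" "length \<beta> = n" and pos: "\<And>i. i < n \<Longrightarrow> 0 < \<beta> ! i"
    using \<alpha> \<beta> T unfolding is_svd_values_def Let_def by auto
  have "\<forall>j<i. \<alpha> ! j = \<beta> ! j" if "i \<le> n" for i
    using that
  proof (induction i)
    case (Suc i)
    then have IH: "(\<Prod>j<i. \<alpha> ! j) = (\<Prod>j<i. \<beta> ! j)" by auto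
    have "(\<Prod>j<i. \<alpha> ! j) * \<alpha> ! i = (\<Prod>j<i. \<beta> ! j) * \<beta> ! i"
      using prod_svd_values_eq_max_minor[OF \<alpha> T, of "Suc i"] prod_svd_values_eq_max_minor[OF \<beta> T, of "Suc i"]
        Suc.prems by simp
    moreover have "0 < (\<Prod>j<i. \<beta> ! j)" using pos Suc.prems by (intro prod_pos) auto
    ultimately have "\<alpha> ! i = \<beta> ! i" unfolding IH by (metis less_irrefl mult_left_cancel)
    then show ?case using Suc less_Suc_eq by auto
  qed simp
  then show ?thesis using length by (intro nth_equalityI) auto
qed

end

theorem lemma3p2:
  fixes av :: "'a::field \<Rightarrow> real" and T :: "'a mat" and n s :: nat
  assumes "nonarch_abs av"
    and "1 \<le> s" and "s \<le> n"
    and "T \<in> carrier_mat n n" and "det T \<noteq> 0"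
  shows "sv_fun av s T =
    Max {av (det (submatrix T I J)) | I J.
           I \<subseteq> {..<n} \<and> J \<subseteq> {..<n} \<and> card I = s \<and> card J = s}"
proof -
  interpret nonarch_field av by (rule nonarch_field.intro) fact
  have "0 < n" using assms(2,3) by simp
  obtain \<alpha> where \<alpha>: "is_svd_values av T \<alpha>" using svd_values_exist[OF assms(4,5) \<open>0 < n\<close>] by blast
  then have "singular_values av T = \<alpha>"
    unfolding singular_values_def using svd_values_unique[OF _ _ assms(4)] by blast
  then show ?thesis
    using prod_svd_values_eq_max_minor[OF \<alpha> assms(4,3) \<open>0 < n\<close>] unfolding sv_fun_def max_minor_def by simp
qed

end
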